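(* For a positive integer $\tau$ and $p\in[0,1]$, let \[ R_\tau(p) := \min \mathbb{E}\big[\#\{t\in\{0,1,\dots,\tau\} : X_t = 0\} \,\big|\, X_0 = 0\big], \] where the minimum is over all sequences of instructions, $(X_t)$ being the guided random walk following them. Then for any integers $0\le t_1\le t_2$, any $x\in\mathbb{Z}^2$, and any guided random walk $(X_t)$ (any sequence of instructions, any possibly random initial position $X_0$), \[ \mathbb{P}\big(X_t = x \text{ for some } t\in[t_1,t_2]\big) \le \frac{\mathbb{E}\big[\#\{t\in[t_1,t_2+\tau] : X_t = x\}\big]}{R_\tau(p)}. \]
   Context: Integer intervals $[a,b]$ denote $\{a,a+1,\dots,b\}$. A sequence of instructions is an infinite walk $(x_t)_{t\ge 0}$ in $\mathbb{Z}^2$ with $x_{t+1}-x_t\in\{(\pm1,0),(0,\pm1)\}$. The guided random walk with error probability $p$ following it is the process $(X_t)_{t\ge0}$ whose increments are independent (and independent of $X_0$), with $X_{t+1}-X_t = x_{t+1}-x_t$ with probability $1-p$, and $X_{t+1}-X_t$ uniformly distributed on $\{(\pm1,0),(0,\pm1)\}$ with probability $p$. *)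

theory Defs
  imports "HOL-Probability.Probability"
begin

definition unit_steps :: "(int \<times> int) set" where
  "unit_steps = {(1,0), (-1,0), (0,1), (0,-1)}"

definition is_instructions :: "(nat \<Rightarrow> int \<times> int) \<Rightarrow> bool" where
  "is_instructions x \<longleftrightarrow> (\<forall>t. x (Suc t) - x t \<in> unit_steps)"

definition step_pmf :: "real \<Rightarrow> int \<times> int \<Rightarrow> (int \<times> int) pmf" where
  "step_pmf p d = bind_pmf (bernoulli_pmf p)
      (\<lambda>err. if err then pmf_of_set unit_steps else return_pmf d)"

definition guided_walk ::
  "'w measure \<Rightarrow> real \<Rightarrow> (nat \<Rightarrow> int \<times> int) \<Rightarrow> (nat \<Rightarrow> 'w \<Rightarrow> int \<times> int) \<Rightarrow> bool" where
  "guided_walk M p x X \<longleftrightarrow>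
     prob_space M \<and> is_instructions x \<and>
     (\<forall>t. X t \<in> measurable M (count_space UNIV)) \<and>
     prob_space.indep_vars M (\<lambda>_. count_space UNIV)
        (\<lambda>t \<omega>. if t = 0 then X 0 \<omega> else X t \<omega> - X (t - 1) \<omega>) UNIV \<and>
     (\<forall>t. distr M (count_space UNIV) (\<lambda>\<omega>. X (Suc t) \<omega> - X t \<omega>)
            = measure_pmf (step_pmf p (x (Suc t) - x t)))"

primrec path_pmf :: "(nat \<Rightarrow> int \<times> int) \<Rightarrow> real \<Rightarrow> nat \<Rightarrow> (int \<times> int) list pmf" where
  "path_pmf x p 0 = return_pmf [(0,0)]"
| "path_pmf x p (Suc n) = bind_pmf (path_pmf x p n)
     (\<lambda>xs. map_pmf (\<lambda>d. xs @ [last xs + d]) (step_pmf p (x (Suc n) - x n)))"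

definition R :: "nat \<Rightarrow> real \<Rightarrow> real" where
  "R \<tau> p = Inf {measure_pmf.expectation (path_pmf x p \<tau>)
                   (\<lambda>xs. real (card {t \<in> {0..\<tau>}. xs ! t = (0,0)})) | x. is_instructions x}"

end

(* Split the event of a visit to z during [t1, t2] according to the time s of the first visit.
   The first visit at s is an event of the walk stopped at s, hence independent of the increments
   after s; the walk X (s + k) - X s is a guided walk from the origin following the shifted
   instructions, so given the first visit at s the expected number of visits to z during
   [s, s + tau] is at least R_tau(p).  As the first visit time is unique, these visits are distinct
   times in [t1, t2 + tau], and summing over s gives P(visit) R_tau(p) <= E[#visits].
   Finally R_tau(p) >= 1, because time 0 is always counted. *)
theory Submission
  imports Defs
begin

lemma measure_pmf_pair:
  fixes A :: "'a::countable pmf" and B :: "'b::countable pmf"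
  shows "measure_pmf A \<Otimes>\<^sub>M measure_pmf B = measure_pmf (pair_pmf A B)"
proof (rule measure_eqI_countable[where A = UNIV])
  have "sets (measure_pmf A \<Otimes>\<^sub>M measure_pmf B) =
        sets (count_space (UNIV :: 'a set) \<Otimes>\<^sub>M count_space (UNIV :: 'b set))"
    by (rule sets_pair_measure_cong) auto
  also have "\<dots> = Pow UNIV"
    by (subst pair_measure_countable) auto
  finally show "sets (measure_pmf A \<Otimes>\<^sub>M measure_pmf B) = Pow UNIV" .
  show "emeasure (measure_pmf A \<Otimes>\<^sub>M measure_pmf B) {ab} = emeasure (pair_pmf A B) {ab}"
    for ab
  proof (cases ab)
    case (Pair a b)
    have "emeasure (measure_pmf A \<Otimes>\<^sub>M measure_pmf B) ({a} \<times> {b}) = emeasure A {a} * emeasure B {b}"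
      by (rule measure_pmf.emeasure_pair_measure_Times) auto
    then show ?thesis
      using Pair by (simp add: emeasure_pmf_single pmf_pair ennreal_mult)
  qed
qed simp_all

lemma (in finite_measure) has_bochner_integral_card:
  assumes "finite S" and "\<And>t. t \<in> S \<Longrightarrow> {\<omega> \<in> space M. P t \<omega>} \<in> sets M"
  shows "has_bochner_integral M (\<lambda>\<omega>. real (card {t \<in> S. P t \<omega>}))
           (\<Sum>t\<in>S. measure M {\<omega> \<in> space M. P t \<omega>})"
proof -
  have "has_bochner_integral M (\<lambda>\<omega>. \<Sum>t\<in>S. indicator {\<omega> \<in> space M. P t \<omega>} \<omega>)
          (\<Sum>t\<in>S. measure M {\<omega> \<in> space M. P t \<omega>})"
    using assms(2)
    by (intro has_bochner_integral_sum has_bochner_integral_real_indicator)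
       (auto simp: emeasure_eq_measure)
  moreover have "real (card {t \<in> S. P t \<omega>}) = (\<Sum>t\<in>S. indicator {\<omega> \<in> space M. P t \<omega>} \<omega>)"
    if "\<omega> \<in> space M" for \<omega>
    using assms(1) that by (simp add: indicator_def sum.If_cases Int_def)
  ultimately show ?thesis
    by (subst has_bochner_integral_cong) auto
qed

lemma is_instructions_shift: "is_instructions x \<Longrightarrow> is_instructions (\<lambda>j. x (s + j))"
  unfolding is_instructions_def by (metis add_Suc_right)

lemma length_path_pmf: "xs \<in> set_pmf (path_pmf x p n) \<Longrightarrow> length xs = Suc n"
  by (induction n arbitrary: xs) auto

lemma map_butlast_path_pmf_Suc: "map_pmf butlast (path_pmf x p (Suc n)) = path_pmf x p n"
  by (simp add: map_bind_pmf map_pmf_comp map_pmf_const bind_return_pmf')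

lemma map_nth_path_pmf:
  assumes "k \<le> n"
  shows "map_pmf (\<lambda>xs. xs ! k) (path_pmf x p n) = map_pmf last (path_pmf x p k)"
  using assms
proof (induction n)
  case (Suc n)
  show ?case
  proof (cases "k = Suc n")
    case True
    then show ?thesis
      by (intro map_pmf_cong) (auto dest!: length_path_pmf simp: last_conv_nth nth_append)
  next
    case False
    then have "k \<le> n" using Suc.prems by simp
    have "map_pmf (\<lambda>xs. xs ! k) (path_pmf x p (Suc n)) =
          map_pmf (\<lambda>xs. butlast xs ! k) (path_pmf x p (Suc n))"
      using \<open>k \<le> n\<close> by (intro map_pmf_cong) (auto dest!: length_path_pmf simp: nth_append)
    also have "\<dots> = map_pmf (\<lambda>xs. xs ! k) (map_pmf butlast (path_pmf x p (Suc n)))"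
      by (simp only: map_pmf_comp o_def)
    also have "\<dots> = map_pmf (\<lambda>xs. xs ! k) (path_pmf x p n)"
      by (simp only: map_butlast_path_pmf_Suc)
    finally show ?thesis using Suc.IH \<open>k \<le> n\<close> by simp
  qed
qed simp

lemma map_last_path_pmf_Suc:
  "map_pmf last (path_pmf x p (Suc n)) =
   map_pmf (\<lambda>(a, b). a + b) (pair_pmf (map_pmf last (path_pmf x p n)) (step_pmf p (x (Suc n) - x n)))"
  by (simp add: pair_pmf_def map_pmf_def bind_assoc_pmf bind_return_pmf)

lemma R_le_expectation:
  assumes "is_instructions x"
  shows "R \<tau> p \<le> measure_pmf.expectation (path_pmf x p \<tau>)
                      (\<lambda>xs. real (card {t \<in> {0..\<tau>}. xs ! t = (0, 0)}))"
  unfolding R_def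
proof (rule cInf_lower)
  show "bdd_below {measure_pmf.expectation (path_pmf x p \<tau>)
          (\<lambda>xs. real (card {t \<in> {0..\<tau>}. xs ! t = (0, 0)})) | x. is_instructions x}"
    by (rule bdd_belowI[where m = 0]) auto
qed (use assms in blast)

lemma expectation_visits_path_pmf:
  "measure_pmf.expectation (path_pmf x p \<tau>) (\<lambda>xs. real (card {t \<in> {0..\<tau>}. xs ! t = (0, 0)}))
   = (\<Sum>t\<in>{0..\<tau>}. measure_pmf.prob (map_pmf last (path_pmf x p t)) {0})"
proof -
  have "measure_pmf.prob (path_pmf x p \<tau>) {xs. xs ! t = (0, 0)}
        = measure_pmf.prob (map_pmf last (path_pmf x p t)) {0}" if "t \<le> \<tau>" for t
    by (simp flip: map_nth_path_pmf[OF that] add: vimage_def zero_prod_def)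
  then show ?thesis
    using measure_pmf.has_bochner_integral_card[of "{0..\<tau>}" "path_pmf x p \<tau>" "\<lambda>t xs. xs ! t = (0, 0)"]
    by (simp add: has_bochner_integral_iff)
qed

lemma one_le_R: "1 \<le> R \<tau> p"
  unfolding R_def
proof (rule cInf_greatest)
  have "is_instructions (\<lambda>t. (int t, 0))"
    by (simp add: is_instructions_def unit_steps_def)
  then show "{measure_pmf.expectation (path_pmf x p \<tau>)
               (\<lambda>xs. real (card {t \<in> {0..\<tau>}. xs ! t = (0, 0)})) | x. is_instructions x} \<noteq> {}"
    by blast
next
  fix c
  assume "c \<in> {measure_pmf.expectation (path_pmf x p \<tau>)
               (\<lambda>xs. real (card {t \<in> {0..\<tau>}. xs ! t = (0, 0)})) | x. is_instructions x}"
  then obtain x where "c = measure_pmf.expectation (path_pmf x p \<tau>)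
                          (\<lambda>xs. real (card {t \<in> {0..\<tau>}. xs ! t = (0, 0)}))"
    by blast
  then have c: "c = (\<Sum>t\<in>{0..\<tau>}. measure_pmf.prob (map_pmf last (path_pmf x p t)) {0})"
    by (simp only: expectation_visits_path_pmf)
  have "1 = measure_pmf.prob (map_pmf last (path_pmf x p 0)) {0}"
    by (simp add: zero_prod_def)
  also have "\<dots> \<le> c"
    unfolding c by (rule member_le_sum) auto
  finally show "1 \<le> c" .
qed

locale guided_random_walk =
  fixes M :: "'w measure" and p :: real
    and x :: "nat \<Rightarrow> int \<times> int" and X :: "nat \<Rightarrow> 'w \<Rightarrow> int \<times> int"
  assumes guided_walk: "guided_walk M p x X"
begin

sublocale prob_space M
  using guided_walk by (simp add: guided_walk_def)

definition increment :: "nat \<Rightarrow> 'w \<Rightarrow> int \<times> int" where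
  "increment t \<omega> = (if t = 0 then X 0 \<omega> else X t \<omega> - X (t - 1) \<omega>)"

lemma measurable_X [measurable]: "X t \<in> measurable M (count_space UNIV)"
  using guided_walk by (simp add: guided_walk_def)

lemma indep_vars_increment: "indep_vars (\<lambda>_. count_space UNIV) increment UNIV"
  using guided_walk unfolding guided_walk_def increment_def [abs_def] by simp

lemma distr_step:
  "distr M (count_space UNIV) (\<lambda>\<omega>. X (Suc t) \<omega> - X t \<omega>) = measure_pmf (step_pmf p (x (Suc t) - x t))"
  using guided_walk by (simp add: guided_walk_def)

lemma X_eq_sum_increment: "X t \<omega> = (\<Sum>i\<le>t. increment i \<omega>)"
  by (induction t) (simp_all add: increment_def)

lemma X_diff_eq_sum_increment: "X (s + k) \<omega> - X s \<omega> = (\<Sum>i\<in>{s<..s + k}. increment i \<omega>)"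
  by (simp add: X_eq_sum_increment sum_up_index_split atLeastSucAtMost_greaterThanAtMost)

lemma indep_var_increment_blocks:
  assumes "K \<inter> L = {}" and "finite K" and "finite L"
  shows "indep_var (count_space UNIV) (\<lambda>\<omega>. g (restrict (\<lambda>i. increment i \<omega>) K))
                   (count_space UNIV) (\<lambda>\<omega>. h (restrict (\<lambda>i. increment i \<omega>) L))"
proof -
  have "PiM I (\<lambda>_. count_space UNIV) = count_space (PiE I (\<lambda>_. UNIV :: (int \<times> int) set))"
    if "finite I" for I :: "nat set"
    using that by (intro count_space_PiM_finite) auto
  then have "indep_var (count_space UNIV) (g \<circ> (\<lambda>\<omega>. restrict (\<lambda>i. increment i \<omega>) K))
                       (count_space UNIV) (h \<circ> (\<lambda>\<omega>. restrict (\<lambda>i. increment i \<omega>) L))"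
    using assms by (intro indep_var_compose[OF indep_var_restrict[OF indep_vars_increment]]) auto
  then show ?thesis
    by (simp add: comp_def)
qed

lemma prob_stopped_and_increment:
  "prob {\<omega> \<in> space M. Q (\<lambda>t. X (min t s) \<omega>) \<and> X (s + k) \<omega> - X s \<omega> = d} =
   prob {\<omega> \<in> space M. Q (\<lambda>t. X (min t s) \<omega>)} * prob {\<omega> \<in> space M. X (s + k) \<omega> - X s \<omega> = d}"
proof -
  have "indep_var (count_space UNIV) (\<lambda>\<omega>. (\<lambda>f. Q (\<lambda>t. \<Sum>i\<le>min t s. f i)) (restrict (\<lambda>i. increment i \<omega>) {..s}))
                  (count_space UNIV) (\<lambda>\<omega>. (\<lambda>f. (\<Sum>i\<in>{s<..s + k}. f i) = d) (restrict (\<lambda>i. increment i \<omega>) {s<..s + k}))"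
    by (rule indep_var_increment_blocks) auto
  then have "indep_var (count_space UNIV) (\<lambda>\<omega>. Q (\<lambda>t. X (min t s) \<omega>))
                       (count_space UNIV) (\<lambda>\<omega>. X (s + k) \<omega> - X s \<omega> = d)"
    by (simp only: X_diff_eq_sum_increment) (simp add: X_eq_sum_increment)
  from prob_indep_random_variable[OF this, of "{True}" "{True}"] show ?thesis
    by simp
qed

lemma distr_X_diff:
  "distr M (count_space UNIV) (\<lambda>\<omega>. X (s + n) \<omega> - X s \<omega>) =
   measure_pmf (map_pmf last (path_pmf (\<lambda>j. x (s + j)) p n))"
proof (induction n)
  case 0
  show ?case
    by (simp add: return_pmf.rep_eq zero_prod_def)
next
  case (Suc n)
  let ?S = "\<lambda>\<omega>. X (s + n) \<omega> - X s \<omega>" and ?D = "\<lambda>\<omega>. X (Suc (s + n)) \<omega> - X (s + n) \<omega>"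
  have "indep_var (count_space UNIV) (\<lambda>\<omega>. (\<lambda>f. \<Sum>i\<in>{s<..s + n}. f i) (restrict (\<lambda>i. increment i \<omega>) {s<..s + n}))
                  (count_space UNIV) (\<lambda>\<omega>. (\<lambda>f. f (Suc (s + n))) (restrict (\<lambda>i. increment i \<omega>) {Suc (s + n)}))"
    by (rule indep_var_increment_blocks) auto
  then have "indep_var (count_space UNIV) ?S (count_space UNIV) ?D"
    by (simp add: X_diff_eq_sum_increment increment_def)
  then have joint: "distr M (count_space UNIV \<Otimes>\<^sub>M count_space UNIV) (\<lambda>\<omega>. (?S \<omega>, ?D \<omega>)) =
             measure_pmf (pair_pmf (map_pmf last (path_pmf (\<lambda>j. x (s + j)) p n))
                                   (step_pmf p (x (Suc (s + n)) - x (s + n))))"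
    by (simp add: indep_var_distribution_eq Suc.IH distr_step measure_pmf_pair)
  have plus: "(\<lambda>(a, b). a + b) \<in> measurable (count_space UNIV \<Otimes>\<^sub>M count_space UNIV)
                                              (count_space (UNIV :: (int \<times> int) set))"
    by (subst pair_measure_countable) auto
  have "distr M (count_space UNIV) (\<lambda>\<omega>. X (s + Suc n) \<omega> - X s \<omega>) =
        distr M (count_space UNIV) ((\<lambda>(a, b). a + b) \<circ> (\<lambda>\<omega>. (?S \<omega>, ?D \<omega>)))"
    by (simp add: comp_def)
  also have "\<dots> = distr (distr M (count_space UNIV \<Otimes>\<^sub>M count_space UNIV) (\<lambda>\<omega>. (?S \<omega>, ?D \<omega>)))
                        (count_space UNIV) (\<lambda>(a, b). a + b)"
    by (rule distr_distr[symmetric, OF plus]) simp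
  also have "\<dots> = measure_pmf (map_pmf last (path_pmf (\<lambda>j. x (s + j)) p (Suc n)))"
    unfolding map_last_path_pmf_Suc by (simp add: joint map_pmf_rep_eq)
  finally show ?case .
qed

lemma prob_X_diff_eq_0:
  "prob {\<omega> \<in> space M. X (s + k) \<omega> - X s \<omega> = 0} =
   measure_pmf.prob (map_pmf last (path_pmf (\<lambda>j. x (s + j)) p k)) {0}"
  using measure_distr[of "\<lambda>\<omega>. X (s + k) \<omega> - X s \<omega>" M "count_space UNIV" "{0}"]
  by (simp add: distr_X_diff vimage_def Int_def conj_commute)

lemma R_le_expected_returns:
  "R \<tau> p \<le> (\<Sum>k\<in>{0..\<tau>}. prob {\<omega> \<in> space M. X (s + k) \<omega> - X s \<omega> = 0})"
proof -
  have "is_instructions x"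
    using guided_walk by (simp add: guided_walk_def)
  then have "R \<tau> p \<le> measure_pmf.expectation (path_pmf (\<lambda>j. x (s + j)) p \<tau>)
                        (\<lambda>xs. real (card {t \<in> {0..\<tau>}. xs ! t = (0, 0)}))"
    by (intro R_le_expectation is_instructions_shift)
  also have "\<dots> = (\<Sum>k\<in>{0..\<tau>}. prob {\<omega> \<in> space M. X (s + k) \<omega> - X s \<omega> = 0})"
    by (simp only: expectation_visits_path_pmf prob_X_diff_eq_0)
  finally show ?thesis .
qed

definition first_visit :: "nat \<Rightarrow> int \<times> int \<Rightarrow> nat \<Rightarrow> 'w set" where
  "first_visit t1 z s = {\<omega> \<in> space M. X s \<omega> = z \<and> (\<forall>t\<in>{t1..<s}. X t \<omega> \<noteq> z)}"

lemma sets_first_visit [measurable]: "first_visit t1 z s \<in> sets M"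
  unfolding first_visit_def by measurable

lemma first_visit_unique:
  assumes "\<omega> \<in> first_visit t1 z s" and "\<omega> \<in> first_visit t1 z s'" and "t1 \<le> s" and "t1 \<le> s'"
  shows "s = s'"
  using assms unfolding first_visit_def by (cases s s' rule: linorder_cases) auto

lemma visit_subset_first_visit:
  "{\<omega> \<in> space M. \<exists>t\<in>{t1..t2}. X t \<omega> = z} \<subseteq> (\<Union>s\<in>{t1..t2}. first_visit t1 z s)"
proof
  fix \<omega>
  assume "\<omega> \<in> {\<omega> \<in> space M. \<exists>t\<in>{t1..t2}. X t \<omega> = z}"
  then obtain t where "\<omega> \<in> space M" "t \<in> {t1..t2}" "X t \<omega> = z"
    by auto
  define s where "s = (LEAST s. t1 \<le> s \<and> X s \<omega> = z)"
  have "t1 \<le> s \<and> X s \<omega> = z"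
    unfolding s_def by (rule LeastI[of _ t]) (use \<open>t \<in> {t1..t2}\<close> \<open>X t \<omega> = z\<close> in auto)
  moreover have "s \<le> t"
    unfolding s_def by (rule Least_le) (use \<open>t \<in> {t1..t2}\<close> \<open>X t \<omega> = z\<close> in auto)
  moreover have "X t' \<omega> \<noteq> z" if "t' \<in> {t1..<s}" for t'
    using that not_less_Least[of t' "\<lambda>s. t1 \<le> s \<and> X s \<omega> = z"] unfolding s_def by auto
  ultimately show "\<omega> \<in> (\<Union>s\<in>{t1..t2}. first_visit t1 z s)"
    using \<open>\<omega> \<in> space M\<close> \<open>t \<in> {t1..t2}\<close> unfolding first_visit_def by auto
qed

text \<open>A first visit at time s is an event of the walk stopped at s, so it is independent of
  the later increment X (s + k) - X s; on the first visit, X (s + k) = z means that increment is 0.\<close>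
lemma prob_first_visit_Int_visit:
  "prob (first_visit t1 z s \<inter> {\<omega> \<in> space M. X (s + k) \<omega> = z}) =
   prob (first_visit t1 z s) * prob {\<omega> \<in> space M. X (s + k) \<omega> - X s \<omega> = 0}"
proof -
  define Q where "Q f \<longleftrightarrow> f s = z \<and> (\<forall>t\<in>{t1..<s}. f t \<noteq> z)" for f :: "nat \<Rightarrow> int \<times> int"
  have stopped: "first_visit t1 z s = {\<omega> \<in> space M. Q (\<lambda>t. X (min t s) \<omega>)}"
    unfolding first_visit_def Q_def by auto
  have "{\<omega> \<in> space M. Q (\<lambda>t. X (min t s) \<omega>)} \<inter> {\<omega> \<in> space M. X (s + k) \<omega> = z} =
        {\<omega> \<in> space M. Q (\<lambda>t. X (min t s) \<omega>) \<and> X (s + k) \<omega> - X s \<omega> = 0}"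
    unfolding Q_def by auto
  then show ?thesis
    unfolding stopped by (simp only: prob_stopped_and_increment)
qed

lemma prob_visit_le_sum_first_visit:
  "prob {\<omega> \<in> space M. \<exists>t\<in>{t1..t2}. X t \<omega> = z} \<le> (\<Sum>s\<in>{t1..t2}. prob (first_visit t1 z s))"
proof -
  have "prob {\<omega> \<in> space M. \<exists>t\<in>{t1..t2}. X t \<omega> = z} \<le> prob (\<Union>s\<in>{t1..t2}. first_visit t1 z s)"
    by (intro finite_measure_mono visit_subset_first_visit) auto
  also have "\<dots> \<le> (\<Sum>s\<in>{t1..t2}. prob (first_visit t1 z s))"
    by (rule finite_measure_subadditive_finite) auto
  finally show ?thesis .
qed

text \<open>The map (s, k) \<mapsto> s + k is injective here because s is the first visit.\<close>
lemma card_first_visit_returns_le: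
  "card {u \<in> {t1..t2} \<times> {0..\<tau>}. \<omega> \<in> first_visit t1 z (fst u) \<and> X (fst u + snd u) \<omega> = z}
     \<le> card {t \<in> {t1..t2 + \<tau>}. X t \<omega> = z}"
proof (rule card_inj_on_le)
  show "inj_on (\<lambda>(s, k). s + k)
          {u \<in> {t1..t2} \<times> {0..\<tau>}. \<omega> \<in> first_visit t1 z (fst u) \<and> X (fst u + snd u) \<omega> = z}"
    by (auto intro!: inj_onI dest: first_visit_unique)
qed auto

lemma prob_visit_mult_R_le:
  "prob {\<omega> \<in> space M. \<exists>t\<in>{t1..t2}. X t \<omega> = z} * R \<tau> p
     \<le> (\<integral>\<omega>. real (card {t \<in> {t1..t2 + \<tau>}. X t \<omega> = z}) \<partial>M)"
proof -
  let ?A = "first_visit t1 z" and ?I = "{t1..t2} \<times> {0..\<tau>}"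
  let ?returns = "\<lambda>\<omega>. real (card {u \<in> ?I. \<omega> \<in> ?A (fst u) \<and> X (fst u + snd u) \<omega> = z})"
  have returns_integral: "has_bochner_integral M ?returns
      (\<Sum>u\<in>?I. prob {\<omega> \<in> space M. \<omega> \<in> ?A (fst u) \<and> X (fst u + snd u) \<omega> = z})"
    by (rule has_bochner_integral_card) measurable
  have visits_integral: "has_bochner_integral M (\<lambda>\<omega>. real (card {t \<in> {t1..t2 + \<tau>}. X t \<omega> = z}))
      (\<Sum>t\<in>{t1..t2 + \<tau>}. prob {\<omega> \<in> space M. X t \<omega> = z})"
    by (rule has_bochner_integral_card) auto
  have "prob {\<omega> \<in> space M. \<exists>t\<in>{t1..t2}. X t \<omega> = z} * R \<tau> p \<le> (\<Sum>s\<in>{t1..t2}. prob (?A s) * R \<tau> p)"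
    using prob_visit_le_sum_first_visit one_le_R[of \<tau> p]
    by (simp add: mult_right_mono flip: sum_distrib_right)
  also have "\<dots> \<le> (\<Sum>s\<in>{t1..t2}. \<Sum>k\<in>{0..\<tau>}. prob (?A s \<inter> {\<omega> \<in> space M. X (s + k) \<omega> = z}))"
    unfolding prob_first_visit_Int_visit sum_distrib_left[symmetric]
    by (intro sum_mono mult_left_mono R_le_expected_returns measure_nonneg)
  also have "\<dots> = integral\<^sup>L M ?returns"
  proof -
    have "?A s \<inter> {\<omega> \<in> space M. X (s + k) \<omega> = z} = {\<omega> \<in> space M. \<omega> \<in> ?A s \<and> X (s + k) \<omega> = z}"
      for s k
      using sets.sets_into_space[OF sets_first_visit] by auto
    with returns_integral show ?thesis
      by (simp add: has_bochner_integral_iff sum.cartesian_product case_prod_unfold)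
  qed
  also have "\<dots> \<le> (\<integral>\<omega>. real (card {t \<in> {t1..t2 + \<tau>}. X t \<omega> = z}) \<partial>M)"
    using returns_integral visits_integral card_first_visit_returns_le
    by (intro integral_mono) (auto intro: integrable.intros)
  finally show ?thesis .
qed

end

theorem proposition2:
  fixes M :: "'w measure" and p :: real and \<tau> t1 t2 :: nat and z :: "int \<times> int"
    and x :: "nat \<Rightarrow> int \<times> int" and X :: "nat \<Rightarrow> 'w \<Rightarrow> int \<times> int"
  assumes "0 < \<tau>" and "0 \<le> p" and "p \<le> 1" and "t1 \<le> t2"
    and "guided_walk M p x X"
  shows "measure M {\<omega> \<in> space M. \<exists>t \<in> {t1..t2}. X t \<omega> = z}
           \<le> (\<integral>\<omega>. real (card {t \<in> {t1..t2 + \<tau>}. X t \<omega> = z}) \<partial>M) / R \<tau> p"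
proof -
  interpret guided_random_walk M p x X
    by standard fact
  have "0 < R \<tau> p"
    using one_le_R[of \<tau> p] by simp
  with prob_visit_mult_R_le[of t1 t2 z \<tau>] show ?thesis
    by (simp add: pos_le_divide_eq)
qed

end
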